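(* Let $t$ have a persistent craving representation $(\rhd,\nu,\phi)$ and let $x\in X$. Then $$\nu_{X\setminus\{x\}}(\succ_x)=\frac{\nu(\succ_x)}{1-\phi(M(\rhd,X\setminus\{x\}),x)\,(1-\nu(\succ_x))}.$$
   Context: $X$ is a finite set with at least two elements, $\mathcal{L}(X)$ its linear orders, $M(\succ,A)$ the $\succ$-maximal element of $A$. Given a linear order $\rhd$, the craving preferences $\{\succ_x\}_{x\in X}$ are: $x\succ_x y$ for all $y\ne x$, and for $y,z\ne x$, $y\succ_x z$ iff $y\rhd z$. A distribution $\nu$ supported on $\{\succ_x\}$ is craving monotonic w.r.t. $\rhd$ if $x\rhd y$ implies $\nu(\succ_x)>\nu(\succ_y)>0$. A persistence function is $\phi:X^2\to[0,1)$ with $\phi(x,x)=0$, $\phi(x,y)>0$ for $x\ne y$. A persistent craving representation $(\rhd,\nu,\phi)$, with $\nu$ craving monotonic, is the transition function $t(x,\succ_y)=\phi(x,y)\delta_{\succ_y}+(1-\phi(x,y))\nu$ and $t(x,\succ)=\nu$ for $\succ$ outside the support of $\nu$. For nonempty $A\subseteq X$, $\nu_A$ is the unique stationary distribution of the Markov chain on $\mathcal{L}(X)$ with $m_A(\succ,\succ')=t_{\succ'}(M(\succ,A),\succ)$. *)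

theory Defs
  imports Complex_Main
begin

text \<open>Linear orders on X, as strict total orders (relations) on X.
  (x,y) \<in> r means x is r-better than y.\<close>
definition linorders :: "'a set \<Rightarrow> 'a rel set" where
  "linorders X = {r. r \<subseteq> X \<times> X \<and> strict_linear_order_on X r}"

definition maxel :: "'a rel \<Rightarrow> 'a set \<Rightarrow> 'a" where
  "maxel r A = (THE a. a \<in> A \<and> (\<forall>b\<in>A. b \<noteq> a \<longrightarrow> (a, b) \<in> r))"

definition crave :: "'a set \<Rightarrow> 'a rel \<Rightarrow> 'a \<Rightarrow> 'a rel" where
  "crave X rhd x = {(y, z). y \<in> X \<and> z \<in> X \<and> y \<noteq> z \<and>
      (y = x \<or> (z \<noteq> x \<and> (y, z) \<in> rhd))}"

definition is_dist :: "'s set \<Rightarrow> ('s \<Rightarrow> real) \<Rightarrow> bool" where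
  "is_dist S p \<longleftrightarrow> (\<forall>s\<in>S. p s \<ge> 0) \<and> (\<Sum>s\<in>S. p s) = 1"

definition craving_monotonic :: "'a set \<Rightarrow> 'a rel \<Rightarrow> ('a rel \<Rightarrow> real) \<Rightarrow> bool" where
  "craving_monotonic X rhd nu \<longleftrightarrow>
     is_dist (linorders X) nu \<and>
     (\<forall>r\<in>linorders X. r \<notin> crave X rhd ` X \<longrightarrow> nu r = 0) \<and>
     (\<forall>x\<in>X. \<forall>y\<in>X. (x, y) \<in> rhd \<longrightarrow>
        nu (crave X rhd x) > nu (crave X rhd y) \<and> nu (crave X rhd y) > 0)"

definition persistence :: "'a set \<Rightarrow> ('a \<Rightarrow> 'a \<Rightarrow> real) \<Rightarrow> bool" where
  "persistence X phi \<longleftrightarrow>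
     (\<forall>x\<in>X. \<forall>y\<in>X. 0 \<le> phi x y \<and> phi x y < 1) \<and>
     (\<forall>x\<in>X. phi x x = 0) \<and>
     (\<forall>x\<in>X. \<forall>y\<in>X. x \<noteq> y \<longrightarrow> phi x y > 0)"

text \<open>Transition function of the persistent craving representation:
  trans_fn X rhd nu phi x r r' is the probability t_{r'}(x, r) of the
  preference r' given the chosen alternative x and the current preference r.\<close>
definition trans_fn :: "'a set \<Rightarrow> 'a rel \<Rightarrow> ('a rel \<Rightarrow> real) \<Rightarrow> ('a \<Rightarrow> 'a \<Rightarrow> real)
    \<Rightarrow> 'a \<Rightarrow> 'a rel \<Rightarrow> 'a rel \<Rightarrow> real" where
  "trans_fn X rhd nu phi x r r' =
     (if r \<in> crave X rhd ` X then
        (let y = (THE y. y \<in> X \<and> r = crave X rhd y) in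
           phi x y * (if r' = r then 1 else 0) + (1 - phi x y) * nu r')
      else nu r')"

definition chain_m :: "'a set \<Rightarrow> 'a rel \<Rightarrow> ('a rel \<Rightarrow> real) \<Rightarrow> ('a \<Rightarrow> 'a \<Rightarrow> real)
    \<Rightarrow> 'a set \<Rightarrow> 'a rel \<Rightarrow> 'a rel \<Rightarrow> real" where
  "chain_m X rhd nu phi A r r' = trans_fn X rhd nu phi (maxel r A) r r'"

definition stationary :: "'s set \<Rightarrow> ('s \<Rightarrow> 's \<Rightarrow> real) \<Rightarrow> ('s \<Rightarrow> real) \<Rightarrow> bool" where
  "stationary S m mu \<longleftrightarrow> is_dist S mu \<and>
     (\<forall>s'\<in>S. mu s' = (\<Sum>s\<in>S. mu s * m s s'))"

end

theory Submission
  imports Defs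
begin

(* Under m_{X-{x}} every state other than the craving order for x is left for that order
   with probability nu(crave x): a craving order for y <> x selects its own top element y,
   and phi(y, y) = 0 removes all persistence; any other order is redrawn from nu.  From the
   craving order for x itself, X-{x} is ranked as by rhd, so the chain stays with probability
   q + (1 - q) nu(crave x), where q = phi(M(rhd, X-{x}), x).  The balance equation of the
   stationary distribution at that state is linear in its mass and solves to the formula. *)

lemma linordersD:
  assumes "r \<in> linorders X"
  shows "r \<subseteq> X \<times> X" "trans r" "irrefl r" "total_on X r"
  using assms unfolding linorders_def strict_linear_order_on_def by auto

lemma linorders_asym:
  assumes "r \<in> linorders X" "(a, b) \<in> r"
  shows "(b, a) \<notin> r"
  using linordersD(2,3)[OF assms(1)] assms(2) unfolding trans_def irrefl_def by blast

lemma finite_linorders: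
  assumes "finite X"
  shows "finite (linorders X)"
proof (rule finite_subset)
  show "linorders X \<subseteq> Pow (X \<times> X)" unfolding linorders_def by auto
  show "finite (Pow (X \<times> X))" using assms by simp
qed

lemma maxel_eqI:
  assumes "r \<in> linorders X" "a \<in> A" "\<And>b. b \<in> A \<Longrightarrow> b \<noteq> a \<Longrightarrow> (a, b) \<in> r"
  shows "maxel r A = a"
  unfolding maxel_def
proof (rule the_equality)
  show "a \<in> A \<and> (\<forall>b\<in>A. b \<noteq> a \<longrightarrow> (a, b) \<in> r)" using assms(2,3) by blast
next
  fix a' assume a': "a' \<in> A \<and> (\<forall>b\<in>A. b \<noteq> a' \<longrightarrow> (a', b) \<in> r)"
  show "a' = a"
  proof (rule ccontr)
    assume "a' \<noteq> a"
    then have "(a', a) \<in> r" "(a, a') \<in> r" using a' assms(2,3) by auto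
    then show False using linorders_asym[OF assms(1)] by blast
  qed
qed

lemma maxel_greatest:
  assumes "r \<in> linorders X" "finite X" "A \<subseteq> X" "A \<noteq> {}"
  shows "maxel r A \<in> A" "\<And>b. b \<in> A \<Longrightarrow> b \<noteq> maxel r A \<Longrightarrow> (maxel r A, b) \<in> r"
proof -
  note r = linordersD[OF assms(1)]
  have "finite r" using finite_subset[OF r(1)] assms(2) by simp
  moreover have "acyclic r" using r(2,3) by (simp add: acyclic_irrefl)
  ultimately have "wf r" by (rule finite_acyclic_wf)
  \<comment> \<open>A well-founded minimum has nothing r-better than it in A, i.e. it is the r-best.\<close>
  then obtain a where a: "a \<in> A" "\<And>b. (b, a) \<in> r \<Longrightarrow> b \<notin> A"
    using wfE_min'[OF \<open>wf r\<close> assms(4)] by blast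
  have greatest: "(a, b) \<in> r" if "b \<in> A" "b \<noteq> a" for b
    using r(4) a that assms(3) unfolding total_on_def by blast
  show "maxel r A \<in> A" "\<And>b. b \<in> A \<Longrightarrow> b \<noteq> maxel r A \<Longrightarrow> (maxel r A, b) \<in> r"
    using maxel_eqI[OF assms(1) a(1) greatest] a(1) greatest by auto
qed

lemma crave_in_linorders:
  assumes "r \<in> linorders X" "y \<in> X"
  shows "crave X r y \<in> linorders X"
proof -
  note r = linordersD[OF assms(1)]
  have "trans (crave X r y)"
    using r(2,3) unfolding trans_def irrefl_def crave_def by blast
  moreover have "irrefl (crave X r y)" unfolding irrefl_def crave_def by auto
  moreover have "total_on X (crave X r y)"
    using r(4) unfolding total_on_def crave_def by auto
  moreover have "crave X r y \<subseteq> X \<times> X" unfolding crave_def by auto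
  ultimately show ?thesis unfolding linorders_def strict_linear_order_on_def by auto
qed

lemma inj_on_crave: "inj_on (crave X r) X"
proof (rule inj_onI)
  fix y z assume "y \<in> X" "z \<in> X" "crave X r y = crave X r z"
  then show "y = z" unfolding crave_def by (auto simp: set_eq_iff)
qed

lemma maxel_crave_self:
  assumes "r \<in> linorders X" "A \<subseteq> X" "y \<in> A"
  shows "maxel (crave X r y) A = y"
  using assms by (intro maxel_eqI[OF crave_in_linorders]) (auto simp: crave_def)

lemma maxel_crave_outside:
  assumes "r \<in> linorders X" "finite X" "A \<subseteq> X" "A \<noteq> {}" "x \<in> X" "x \<notin> A"
  shows "maxel (crave X r x) A = maxel r A"
  using assms maxel_greatest[OF assms(1-4)]
  by (intro maxel_eqI[OF crave_in_linorders]) (auto simp: crave_def)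

lemma trans_fn_crave:
  assumes "y \<in> X"
  shows "trans_fn X r nu phi z (crave X r y) r' =
    phi z y * (if r' = crave X r y then 1 else 0) + (1 - phi z y) * nu r'"
proof -
  have "(THE y'. y' \<in> X \<and> crave X r y = crave X r y') = y"
    using assms inj_on_crave[of X r] by (intro the_equality) (auto dest: inj_onD)
  then show ?thesis using assms unfolding trans_fn_def by simp
qed

lemma chain_m_stay_crave:
  assumes "rhd \<in> linorders X" "finite X" "A \<subseteq> X" "A \<noteq> {}" "x \<in> X" "x \<notin> A"
  shows "chain_m X rhd nu phi A (crave X rhd x) (crave X rhd x) =
    phi (maxel rhd A) x + (1 - phi (maxel rhd A) x) * nu (crave X rhd x)"
  unfolding chain_m_def maxel_crave_outside[OF assms] trans_fn_crave[OF assms(5)] by simp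

lemma chain_m_enter_crave:
  assumes "rhd \<in> linorders X" "persistence X phi" "x \<in> X" "s \<noteq> crave X rhd x"
  shows "chain_m X rhd nu phi (X - {x}) s (crave X rhd x) = nu (crave X rhd x)"
proof (cases "s \<in> crave X rhd ` X")
  case True
  then obtain y where y: "y \<in> X" "s = crave X rhd y" by auto
  with assms(4) have "y \<in> X - {x}" by auto
  then have "maxel s (X - {x}) = y"
    using maxel_crave_self[OF assms(1)] y(2) by blast
  moreover have "phi y y = 0" using assms(2) y(1) unfolding persistence_def by blast
  ultimately show ?thesis
    using assms(4) y unfolding chain_m_def by (simp add: trans_fn_crave)
next
  case False
  then show ?thesis unfolding chain_m_def trans_fn_def by simp
qed

lemma stationary_constant_inflow:
  assumes "finite S" "stationary S m mu" "c \<in> S"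
    and "\<And>s. s \<in> S \<Longrightarrow> s \<noteq> c \<Longrightarrow> m s c = b" and "1 - m c c + b \<noteq> 0"
  shows "mu c = b / (1 - m c c + b)"
proof -
  have "mu c = (\<Sum>s\<in>S. mu s * m s c)"
    using assms(2,3) unfolding stationary_def by blast
  also have "\<dots> = mu c * m c c + (\<Sum>s\<in>S - {c}. mu s * m s c)"
    by (rule sum.remove[OF assms(1,3)])
  also have "(\<Sum>s\<in>S - {c}. mu s * m s c) = b * (\<Sum>s\<in>S - {c}. mu s)"
    using assms(4) by (simp add: sum_distrib_left mult.commute)
  also have "(\<Sum>s\<in>S - {c}. mu s) = 1 - mu c"
    using sum.remove[OF assms(1,3), of mu] assms(2) unfolding stationary_def is_dist_def
    by linarith
  finally have "mu c * (1 - m c c + b) = b" by algebra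
  then show ?thesis using assms(5) by (simp add: eq_divide_eq)
qed

theorem proposition9:
  fixes X :: "'a set" and rhd :: "'a rel" and nu :: "'a rel \<Rightarrow> real"
    and phi :: "'a \<Rightarrow> 'a \<Rightarrow> real" and x :: 'a and mu :: "'a rel \<Rightarrow> real"
  assumes "finite X" and "card X \<ge> 2"
    and "rhd \<in> linorders X"
    and "craving_monotonic X rhd nu"
    and "persistence X phi"
    and "x \<in> X"
    and "stationary (linorders X) (chain_m X rhd nu phi (X - {x})) mu"
  shows "mu (crave X rhd x) =
    nu (crave X rhd x) / (1 - phi (maxel rhd (X - {x})) x * (1 - nu (crave X rhd x)))"
proof -
  let ?c = "crave X rhd x" and ?q = "phi (maxel rhd (X - {x})) x" and ?n = "nu (crave X rhd x)"
  have "X - {x} \<noteq> {}"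
  proof
    assume "X - {x} = {}"
    then have "X = {x}" using assms(6) by blast
    then show False using assms(2) by simp
  qed
  then have "maxel rhd (X - {x}) \<in> X - {x}"
    by (rule maxel_greatest(1)[OF assms(3,1) Diff_subset])
  then have q: "0 \<le> ?q" "?q < 1" using assms(5,6) unfolding persistence_def by auto
  have c: "?c \<in> linorders X" by (rule crave_in_linorders[OF assms(3,6)])
  with assms(4) have "0 \<le> ?n" unfolding craving_monotonic_def is_dist_def by blast
  with q have "1 - ?q * (1 - ?n) > 0" using mult_left_le[of "1 - ?n" ?q] by linarith
  moreover have "1 - chain_m X rhd nu phi (X - {x}) ?c ?c + ?n = 1 - ?q * (1 - ?n)"
    using chain_m_stay_crave[OF assms(3,1) Diff_subset \<open>X - {x} \<noteq> {}\<close> assms(6)]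
    by (simp add: algebra_simps)
  ultimately show ?thesis
    using stationary_constant_inflow[OF finite_linorders[OF assms(1)] assms(7) c, of ?n]
      chain_m_enter_crave[OF assms(3,5,6)]
    by simp
qed

end
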